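(* Let $G=(V,E)$ be a finite bipartite graph and fix an edge $e=\{b,w\}$ with $b$ black and $w$ white. Let $G^e=G-e$ (delete the edge only) and $G'=G-\{b,w\}$ (delete both vertices and all incident edges). Then: (i) the channels in $\mathcal{C}_B(G)$ not containing $b$ are exactly the channels in $\mathcal{C}_B(G^e)$ not containing $b$; (ii) if there is a channel $B\in\mathcal{C}_B(G^e)$ with $b\in B$, then there is a bijection $\mathcal{C}_B(G)\to\mathcal{C}_B(G')$ which maps every channel not containing $b$ to itself.
   Context: A channel of a graph $H$ is a vertex set $C$ such that every vertex of $H$ is adjacent to an even number of vertices of $C$ (the empty set included). For a bipartite graph with black/white coloring, $\mathcal{C}_B(H)$ denotes the set of channels of $H$ consisting only of black vertices. *)

theory Defs
  imports Main
begin

definition graph :: "'a set \<Rightarrow> 'a set set \<Rightarrow> bool" where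
  "graph V E \<longleftrightarrow> finite V \<and> (\<forall>e\<in>E. e \<subseteq> V \<and> card e = 2)"

text \<open>Bipartite graph with black vertex set Bk (white vertices are V - Bk):
  every edge has exactly one black and one white endpoint.\<close>
definition bipartite_graph :: "'a set \<Rightarrow> 'a set set \<Rightarrow> 'a set \<Rightarrow> bool" where
  "bipartite_graph V E Bk \<longleftrightarrow> graph V E \<and> Bk \<subseteq> V \<and>
     (\<forall>e\<in>E. card (e \<inter> Bk) = 1 \<and> card (e - Bk) = 1)"

definition channel :: "'a set \<Rightarrow> 'a set set \<Rightarrow> 'a set \<Rightarrow> bool" where
  "channel V E C \<longleftrightarrow> C \<subseteq> V \<and> (\<forall>v\<in>V. even (card {u\<in>C. {u, v} \<in> E}))"

definition black_channels :: "'a set \<Rightarrow> 'a set set \<Rightarrow> 'a set \<Rightarrow> 'a set set" where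
  "black_channels V E Bk = {C. channel V E C \<and> C \<subseteq> Bk}"

definition delete_edge :: "'a set set \<Rightarrow> 'a set \<Rightarrow> 'a set set" where
  "delete_edge E e = E - {e}"

definition delete_vertices_edges :: "'a set set \<Rightarrow> 'a set \<Rightarrow> 'a set set" where
  "delete_vertices_edges E S = {f\<in>E. f \<inter> S = {}}"

end

theory Submission
  imports Defs
begin

text \<open>The vertices with an odd number of neighbours in \<open>C\<close> form the defect set of \<open>C\<close>;
  channels are the sets without defects, and the defect set is additive under symmetric
  difference (linearity over GF(2)). For black \<open>C\<close>, deleting the edge \<open>{b, w}\<close> toggles \<open>w\<close> in the
  defect set if \<open>b \<in> C\<close> and changes nothing otherwise, which gives (i); deleting \<open>b\<close> and \<open>w\<close> only
  forgets the defect at \<open>w\<close> (\<open>b\<close> is never a defect, having no black neighbours). Hence the black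
  channels of \<open>G'\<close> are the black sets avoiding \<open>b\<close> whose defect set is contained in \<open>{w}\<close>,
  while the hypothesis provides a black \<open>B \<ni> b\<close> with defect set exactly \<open>{w}\<close>. Adding \<open>B\<close> to the
  channels of \<open>G\<close> containing \<open>b\<close> is then the required bijection.\<close>

lemma even_card_sym_diff:
  assumes "finite A" "finite B"
  shows "even (card (sym_diff A B)) \<longleftrightarrow> (even (card A) \<longleftrightarrow> even (card B))"
proof -
  have "card (sym_diff A B) = card (A - B) + card (B - A)"
    by (rule card_Un_disjoint) (use assms in auto)
  moreover have "card A = card (A \<inter> B) + card (A - B)" "card B = card (A \<inter> B) + card (B - A)"
    using card_Int_Diff[OF assms(1), of B] card_Int_Diff[OF assms(2), of A]
    by (simp_all add: Int_commute)
  ultimately have "card A + card B = card (sym_diff A B) + 2 * card (A \<inter> B)"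
    by simp
  then show ?thesis by presburger
qed

lemma bij_betw_toggle:
  fixes \<phi> :: "'a set \<Rightarrow> 'b set"
  assumes closed: "\<And>C. C \<in> U \<Longrightarrow> sym_diff C B \<in> U"
    and additive: "\<And>C. C \<in> U \<Longrightarrow> \<phi> (sym_diff C B) = sym_diff (\<phi> C) (\<phi> B)"
    and "\<phi> B = {w}" and "b \<in> B"
  shows "bij_betw (\<lambda>C. if b \<in> C then sym_diff C B else C)
           {C \<in> U. \<phi> C = {}} {D \<in> U. b \<notin> D \<and> \<phi> D \<subseteq> {w}}"
proof (rule bij_betw_byWitness[where f' = "\<lambda>D. if w \<in> \<phi> D then sym_diff D B else D"])
  have toggle: "\<phi> (sym_diff C B) = sym_diff (\<phi> C) {w}" if "C \<in> U" for C
    using additive[OF that] \<open>\<phi> B = {w}\<close> by simp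
  have involution: "sym_diff (sym_diff C B) B = C" for C :: "'a set"
    by blast
  show "\<forall>C\<in>{C \<in> U. \<phi> C = {}}.
      (\<lambda>D. if w \<in> \<phi> D then sym_diff D B else D) (if b \<in> C then sym_diff C B else C) = C"
    using toggle involution \<open>b \<in> B\<close> by auto
  show "\<forall>D\<in>{D \<in> U. b \<notin> D \<and> \<phi> D \<subseteq> {w}}.
      (\<lambda>C. if b \<in> C then sym_diff C B else C) (if w \<in> \<phi> D then sym_diff D B else D) = D"
    using toggle involution \<open>b \<in> B\<close> by auto
  show "(\<lambda>C. if b \<in> C then sym_diff C B else C) ` {C \<in> U. \<phi> C = {}}
      \<subseteq> {D \<in> U. b \<notin> D \<and> \<phi> D \<subseteq> {w}}"
    using toggle closed \<open>b \<in> B\<close> by auto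
  show "(\<lambda>D. if w \<in> \<phi> D then sym_diff D B else D) ` {D \<in> U. b \<notin> D \<and> \<phi> D \<subseteq> {w}}
      \<subseteq> {C \<in> U. \<phi> C = {}}"
    using toggle closed \<open>b \<in> B\<close> by (auto 4 3)
qed

definition odd_vertices :: "'a set \<Rightarrow> 'a set set \<Rightarrow> 'a set \<Rightarrow> 'a set" where
  "odd_vertices V E C = {v \<in> V. odd (card {u \<in> C. {u, v} \<in> E})}"

lemma channel_iff_odd_vertices: "channel V E C \<longleftrightarrow> C \<subseteq> V \<and> odd_vertices V E C = {}"
  unfolding channel_def odd_vertices_def by auto

lemma odd_vertices_sym_diff:
  assumes "finite C" "finite D"
  shows "odd_vertices V E (sym_diff C D) = sym_diff (odd_vertices V E C) (odd_vertices V E D)"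
proof -
  have "odd (card {u \<in> sym_diff C D. {u, v} \<in> E})
      \<longleftrightarrow> odd (card {u \<in> C. {u, v} \<in> E}) \<noteq> odd (card {u \<in> D. {u, v} \<in> E})" for v
  proof -
    have "{u \<in> sym_diff C D. {u, v} \<in> E}
        = sym_diff {u \<in> C. {u, v} \<in> E} {u \<in> D. {u, v} \<in> E}"
      by auto
    then show ?thesis
      using even_card_sym_diff[of "{u \<in> C. {u, v} \<in> E}" "{u \<in> D. {u, v} \<in> E}"] assms
      by simp
  qed
  then show ?thesis unfolding odd_vertices_def by auto
qed

lemma odd_vertices_delete_edge_disjoint:
  assumes "e \<inter> C = {}"
  shows "odd_vertices V (delete_edge E e) C = odd_vertices V E C"
proof -
  have "{u \<in> C. {u, v} \<in> delete_edge E e} = {u \<in> C. {u, v} \<in> E}" for v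
    using assms unfolding delete_edge_def by auto
  then show ?thesis unfolding odd_vertices_def by simp
qed

lemma odd_vertices_delete_edge_toggle:
  assumes "{b, w} \<in> E" "finite C" "b \<in> C" "w \<notin> C" "w \<in> V"
  shows "odd_vertices V (delete_edge E {b, w}) C = sym_diff (odd_vertices V E C) {w}"
proof -
  have "b \<noteq> w" using assms by auto
  then have nbrs: "{u \<in> C. {u, v} \<in> delete_edge E {b, w}}
      = {u \<in> C. {u, v} \<in> E} - (if v = w then {b} else {})" for v
    using assms(4) unfolding delete_edge_def by (auto simp: doubleton_eq_iff)
  have "card {u \<in> C. {u, w} \<in> E} = Suc (card ({u \<in> C. {u, w} \<in> E} - {b}))"
    using assms by (subst card.remove[of _ b]) (auto simp: insert_commute)
  then show ?thesis
    using \<open>w \<in> V\<close> unfolding odd_vertices_def nbrs by auto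
qed

lemma odd_vertices_delete_vertices:
  assumes "C \<inter> S = {}"
  shows "odd_vertices (V - S) (delete_vertices_edges E S) C = odd_vertices V E C - S"
proof -
  have "{u \<in> C. {u, v} \<in> delete_vertices_edges E S} = {u \<in> C. {u, v} \<in> E}" if "v \<notin> S" for v
    using assms that unfolding delete_vertices_edges_def by auto
  then show ?thesis unfolding odd_vertices_def by auto
qed

lemma bipartite_odd_vertices_not_black:
  assumes "bipartite_graph V E Bk" "C \<subseteq> Bk"
  shows "odd_vertices V E C \<inter> Bk = {}"
proof -
  have "even (card {u \<in> C. {u, v} \<in> E})" if "v \<in> Bk" for v
  proof -
    have "card ({u, v} \<inter> Bk) = 1" "card {u, v} = 2" if "u \<in> C" "{u, v} \<in> E" for u
      using assms(1) that unfolding bipartite_graph_def graph_def by auto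
    moreover have "{u, v} \<inter> Bk = {u, v}" if "u \<in> C" for u
      using that \<open>v \<in> Bk\<close> assms(2) by auto
    ultimately have "{u \<in> C. {u, v} \<in> E} = {}" by fastforce
    then show ?thesis by (metis card.empty even_zero)
  qed
  then show ?thesis unfolding odd_vertices_def by auto
qed

lemma black_channels_eq_odd_vertices:
  "black_channels V E Bk = {C \<in> Pow (V \<inter> Bk). odd_vertices V E C = {}}"
  unfolding black_channels_def channel_iff_odd_vertices by auto

lemma black_channels_delete_vertices_eq_odd_vertices:
  assumes "bipartite_graph V E Bk" "b \<in> Bk" "w \<notin> Bk"
  shows "black_channels (V - {b, w}) (delete_vertices_edges E {b, w}) (Bk - {b})
    = {C \<in> Pow (V \<inter> Bk). b \<notin> C \<and> odd_vertices V E C \<subseteq> {w}}"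
proof (rule set_eqI)
  fix C
  show "C \<in> black_channels (V - {b, w}) (delete_vertices_edges E {b, w}) (Bk - {b})
    \<longleftrightarrow> C \<in> {C \<in> Pow (V \<inter> Bk). b \<notin> C \<and> odd_vertices V E C \<subseteq> {w}}"
  proof (cases "C \<subseteq> Bk \<and> b \<notin> C")
    case True
    then have "w \<notin> C" using assms(3) by blast
    with True have "odd_vertices (V - {b, w}) (delete_vertices_edges E {b, w}) C
        = odd_vertices V E C - {b, w}"
      by (intro odd_vertices_delete_vertices) auto
    moreover have "b \<notin> odd_vertices V E C"
      using bipartite_odd_vertices_not_black[OF assms(1)] True assms(2) by blast
    ultimately have "odd_vertices (V - {b, w}) (delete_vertices_edges E {b, w}) C = {}
        \<longleftrightarrow> odd_vertices V E C \<subseteq> {w}"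
      by auto
    with True \<open>w \<notin> C\<close> show ?thesis
      unfolding black_channels_def channel_iff_odd_vertices by auto
  next
    case False
    then show ?thesis unfolding black_channels_def by auto
  qed
qed

lemma black_channels_delete_edge_avoiding:
  assumes "w \<notin> Bk"
  shows "{C \<in> black_channels V E Bk. b \<notin> C}
    = {C \<in> black_channels V (delete_edge E {b, w}) Bk. b \<notin> C}"
proof -
  have "odd_vertices V (delete_edge E {b, w}) C = odd_vertices V E C"
    if "C \<subseteq> Bk" "b \<notin> C" for C
    using that assms by (intro odd_vertices_delete_edge_disjoint) auto
  then show ?thesis unfolding black_channels_eq_odd_vertices by auto
qed

lemma odd_vertices_black_channel_delete_edge:
  assumes "graph V E" "{b, w} \<in> E" "w \<notin> Bk"
    and "B \<in> black_channels V (delete_edge E {b, w}) Bk" "b \<in> B"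
  shows "odd_vertices V E B = {w}"
proof -
  have "finite V" "w \<in> V"
    using assms(1,2) unfolding graph_def by auto
  moreover have "B \<subseteq> V" "B \<subseteq> Bk" "odd_vertices V (delete_edge E {b, w}) B = {}"
    using assms(4) unfolding black_channels_eq_odd_vertices by auto
  ultimately show ?thesis
    using odd_vertices_delete_edge_toggle[OF assms(2), of B V] assms(3,5)
    by (auto intro: finite_subset)
qed

theorem lemma5p4:
  fixes V :: "'a set" and E :: "'a set set" and Bk :: "'a set" and b w :: 'a
  assumes "bipartite_graph V E Bk"
    and "{b, w} \<in> E" and "b \<in> Bk" and "w \<notin> Bk"
  shows "{C \<in> black_channels V E Bk. b \<notin> C}
           = {C \<in> black_channels V (delete_edge E {b, w}) Bk. b \<notin> C}
       \<and> ((\<exists>B \<in> black_channels V (delete_edge E {b, w}) Bk. b \<in> B) \<longrightarrow>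
         (\<exists>f. bij_betw f (black_channels V E Bk)
                 (black_channels (V - {b, w}) (delete_vertices_edges E {b, w}) (Bk - {b}))
             \<and> (\<forall>C \<in> black_channels V E Bk. b \<notin> C \<longrightarrow> f C = C)))"
proof -
  have graph: "graph V E" using assms(1) unfolding bipartite_graph_def by blast
  have bij: "bij_betw (\<lambda>C. if b \<in> C then sym_diff C B else C) (black_channels V E Bk)
          (black_channels (V - {b, w}) (delete_vertices_edges E {b, w}) (Bk - {b}))"
    if B: "B \<in> black_channels V (delete_edge E {b, w}) Bk" "b \<in> B" for B
  proof -
    have "finite V" using graph unfolding graph_def by blast
    moreover have "B \<in> Pow (V \<inter> Bk)"
      using B(1) unfolding black_channels_eq_odd_vertices by blast
    ultimately have "odd_vertices V E (sym_diff C B)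
        = sym_diff (odd_vertices V E C) (odd_vertices V E B)" if "C \<in> Pow (V \<inter> Bk)" for C
      using that by (intro odd_vertices_sym_diff) (auto intro: finite_subset)
    then show ?thesis
      unfolding black_channels_delete_vertices_eq_odd_vertices[OF assms(1,3,4)]
      unfolding black_channels_eq_odd_vertices
      using odd_vertices_black_channel_delete_edge[OF graph assms(2,4) B] \<open>b \<in> B\<close>
        \<open>B \<in> Pow (V \<inter> Bk)\<close>
      by (intro bij_betw_toggle) auto
  qed
  show ?thesis
  proof (intro conjI impI)
    show "{C \<in> black_channels V E Bk. b \<notin> C}
        = {C \<in> black_channels V (delete_edge E {b, w}) Bk. b \<notin> C}"
      using assms(4) by (rule black_channels_delete_edge_avoiding)
    assume "\<exists>B \<in> black_channels V (delete_edge E {b, w}) Bk. b \<in> B"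
    then obtain B where "B \<in> black_channels V (delete_edge E {b, w}) Bk" "b \<in> B" by blast
    with bij show "\<exists>f. bij_betw f (black_channels V E Bk)
          (black_channels (V - {b, w}) (delete_vertices_edges E {b, w}) (Bk - {b}))
        \<and> (\<forall>C \<in> black_channels V E Bk. b \<notin> C \<longrightarrow> f C = C)"
      by (intro exI[of _ "\<lambda>C. if b \<in> C then sym_diff C B else C"]) simp
  qed
qed

end
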